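(* Let $q$ be a prime power with $q\not\equiv0\pmod3$. The line $L_c$ of $\mathrm{PG}(3,q)$ through $\mathbf{P}(1,0,0,1)$ and $\mathbf{P}(0,0,1,0)$ is an $\mathcal{E}_{nG}$-line.
   Context: Points of $\mathrm{PG}(3,q)$ are written $\mathbf{P}(x_0,x_1,x_2,x_3)$ over $\mathbb{F}_q$. For $t$ in $\mathbb{F}_q$ or in $\mathbb{F}_{q^2}$, put $P(t)=\mathbf{P}(t^3,t^2,t,1)$ and $P(\infty)=\mathbf{P}(1,0,0,0)$; the twisted cubic is $\mathscr{C}=\{P(t):t\in\mathbb{F}_q\cup\{\infty\}\}$. The osculating plane $\pi_{osc}(t)$ is the plane $x_0-3tx_1+3t^2x_2-t^3x_3=0$ for finite $t$, and $\pi_{osc}(\infty)$ is $x_3=0$. An imaginary chord is a line of $\mathrm{PG}(3,q)$ joining $P(t_1)$ and $P(t_2)$ for conjugate $t_1,t_2=t_1^q\in\mathbb{F}_{q^2}\setminus\mathbb{F}_q$; an imaginary axis is a line of $\mathrm{PG}(3,q)$ equal to $\pi_{osc}(t_1)\cap\pi_{osc}(t_2)$ for conjugate $t_1,t_2\in\mathbb{F}_{q^2}\setminus\mathbb{F}_q$. An $\mathcal{E}_{nG}$-line is a line of $\mathrm{PG}(3,q)$ having no point on $\mathscr{C}$, not contained in any osculating plane $\pi_{osc}(t)$, $t\in\mathbb{F}_q\cup\{\infty\}$, and which is neither an imaginary chord nor an imaginary axis. *)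

theory Defs
  imports Main
begin

text \<open>Homogeneous coordinates (x0,x1,x2,x3) of PG(3,F) for a field F.
  A point is represented by a nonzero vector; a line is a 2-dimensional
  subspace of F^4 (as a set of vectors).\<close>

type_synonym 'a vec4 = "'a \<times> 'a \<times> 'a \<times> 'a"

fun vadd :: "'a::field vec4 \<Rightarrow> 'a vec4 \<Rightarrow> 'a vec4" where
  "vadd (a0,a1,a2,a3) (b0,b1,b2,b3) = (a0+b0, a1+b1, a2+b2, a3+b3)"

fun smul :: "'a::field \<Rightarrow> 'a vec4 \<Rightarrow> 'a vec4" where
  "smul c (a0,a1,a2,a3) = (c*a0, c*a1, c*a2, c*a3)"

fun dot4 :: "'a::field vec4 \<Rightarrow> 'a vec4 \<Rightarrow> 'a" where
  "dot4 (a0,a1,a2,a3) (b0,b1,b2,b3) = a0*b0 + a1*b1 + a2*b2 + a3*b3"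

fun emb4 :: "('a \<Rightarrow> 'b) \<Rightarrow> 'a vec4 \<Rightarrow> 'b vec4" where
  "emb4 f (a0,a1,a2,a3) = (f a0, f a1, f a2, f a3)"

definition zero4 :: "'a::field vec4" where
  "zero4 = (0,0,0,0)"

definition span2 :: "'a::field vec4 \<Rightarrow> 'a vec4 \<Rightarrow> 'a vec4 set" where
  "span2 u v = {vadd (smul a u) (smul b v) | a b. True}"

definition lin_indep2 :: "'a::field vec4 \<Rightarrow> 'a vec4 \<Rightarrow> bool" where
  "lin_indep2 u v \<longleftrightarrow> (\<forall>a b. vadd (smul a u) (smul b v) = zero4 \<longrightarrow> a = 0 \<and> b = 0)"

definition is_line :: "'a::field vec4 set \<Rightarrow> bool" where
  "is_line L \<longleftrightarrow> (\<exists>u v. lin_indep2 u v \<and> L = span2 u v)"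

definition point_on :: "'a::field vec4 \<Rightarrow> 'a vec4 set \<Rightarrow> bool" where
  "point_on x L \<longleftrightarrow> x \<noteq> zero4 \<and> x \<in> L"

definition tc :: "'a::field \<Rightarrow> 'a vec4" where
  "tc t = (t^3, t^2, t, 1)"

definition tc_inf :: "'a::field vec4" where
  "tc_inf = (1, 0, 0, 0)"

text \<open>Coefficient vectors of the osculating planes:
  x0 - 3t x1 + 3t^2 x2 - t^3 x3 = 0, and x3 = 0 for t = infinity.\<close>
definition osc :: "'a::field \<Rightarrow> 'a vec4" where
  "osc t = (1, -(3*t), 3*t^2, -(t^3))"

definition osc_inf :: "'a::field vec4" where
  "osc_inf = (0, 0, 0, 1)"

definition plane_set :: "'a::field vec4 \<Rightarrow> 'a vec4 set" where
  "plane_set c = {x. dot4 c x = 0}"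

definition in_plane :: "'a::field vec4 set \<Rightarrow> 'a vec4 \<Rightarrow> bool" where
  "in_plane L c \<longleftrightarrow> L \<subseteq> plane_set c"

text \<open>Extension of an F_q-line L to F_{q^2} via the field embedding f.\<close>
definition ext_line :: "('a::field \<Rightarrow> 'b::field) \<Rightarrow> 'a vec4 set \<Rightarrow> 'b vec4 set" where
  "ext_line f L = {vadd (smul a (emb4 f x)) (smul b (emb4 f y)) | a b x y. x \<in> L \<and> y \<in> L}"

text \<open>Imaginary chord: L (over F_q) joins P(t) and P(t^q), t in F_{q^2} \ F_q.\<close>
definition imag_chord :: "('a::{field,finite} \<Rightarrow> 'b::field) \<Rightarrow> 'a vec4 set \<Rightarrow> bool" where
  "imag_chord f L \<longleftrightarrow>
     (\<exists>t. t \<notin> range f \<and> ext_line f L = span2 (tc t) (tc (t ^ card (UNIV :: 'a set))))"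

text \<open>Imaginary axis: L = pi_osc(t) \<inter> pi_osc(t^q), t in F_{q^2} \ F_q.\<close>
definition imag_axis :: "('a::{field,finite} \<Rightarrow> 'b::field) \<Rightarrow> 'a vec4 set \<Rightarrow> bool" where
  "imag_axis f L \<longleftrightarrow>
     (\<exists>t. t \<notin> range f \<and>
        ext_line f L = plane_set (osc t) \<inter> plane_set (osc (t ^ card (UNIV :: 'a set))))"

definition EnG_line :: "('a::{field,finite} \<Rightarrow> 'b::field) \<Rightarrow> 'a vec4 set \<Rightarrow> bool" where
  "EnG_line f L \<longleftrightarrow>
     is_line L \<and>
     (\<forall>t. \<not> point_on (tc t) L) \<and> \<not> point_on tc_inf L \<and>
     (\<forall>t. \<not> in_plane L (osc t)) \<and> \<not> in_plane L osc_inf \<and>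
     \<not> imag_chord f L \<and> \<not> imag_axis f L"

definition L_c :: "'a::field vec4 set" where
  "L_c = span2 (1, 0, 0, 1) (0, 0, 1, 0)"

end

theory Submission
  imports Defs "HOL-Number_Theory.Residues"
begin

text \<open>Every vector of \<open>L_c\<close> has the shape \<open>(a,0,b,a)\<close>. A point \<open>P(t)\<close> of the cubic
  would need \<open>t\<^sup>2 = 0\<close> and then \<open>t\<^sup>3 = 1\<close>; an osculating plane containing
  \<open>(0,0,1,0)\<close> needs \<open>3t\<^sup>2 = 0\<close>, i.e. \<open>t = 0\<close> when the characteristic is not 3, and
  \<open>\<pi>\<^sub>o\<^sub>s\<^sub>c(0)\<close> misses \<open>(1,0,0,1)\<close>. Extending scalars to \<open>\<bbbF>\<^sub>q\<^sub>2\<close> does not change this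
  description of \<open>L_c\<close> (only \<open>f 0 = 0\<close> and \<open>f 1 = 1\<close> are needed), so the same
  two facts exclude imaginary chords and axes, for every \<open>t\<close> and not only for
  \<open>t \<notin> \<bbbF>\<^sub>q\<close>.\<close>

lemma three_neq_zero_if_not_dvd_card:
  assumes "\<not> 3 dvd card (UNIV :: 'a::{field,finite} set)"
  shows "(3::'a) \<noteq> 0"
proof
  assume "(3::'a) = 0"
  then have "CHAR('a) dvd 3"
    by (metis of_nat_eq_0_iff_char_dvd of_nat_numeral)
  moreover have "prime (3::nat)"
    by simp
  ultimately have "CHAR('a) = 3"
    by (metis CHAR_not_1 One_nat_def prime_nat_iff)
  with CHAR_dvd_CARD[where 'a = 'a] assms show False
    by simp
qed

lemma mem_L_c_iff: "x \<in> (L_c :: 'a::field vec4 set) \<longleftrightarrow> (\<exists>a b. x = (a, 0, b, a))"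
  unfolding L_c_def span2_def by auto

lemma is_line_L_c: "is_line (L_c :: 'a::field vec4 set)"
  unfolding is_line_def L_c_def lin_indep2_def zero4_def
  by (intro exI[of _ "(1, 0, 0, 1)"] exI[of _ "(0, 0, 1, 0)"]) simp

lemma tc_notin_L_c: "tc t \<notin> L_c"
  by (auto simp: mem_L_c_iff tc_def)

lemma tc_inf_notin_L_c: "tc_inf \<notin> L_c"
  by (auto simp: mem_L_c_iff tc_inf_def)

lemma not_in_plane_L_c_osc:
  assumes "(3::'a::field) \<noteq> 0"
  shows "\<not> in_plane (L_c :: 'a vec4 set) (osc t)"
proof
  assume "in_plane L_c (osc t)"
  then have "(0, 0, 1, 0) \<in> plane_set (osc t)" and "(1, 0, 0, 1) \<in> plane_set (osc t)"
    by (auto simp: in_plane_def mem_L_c_iff)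
  moreover from this(1) assms have "t = 0"
    by (simp add: plane_set_def osc_def)
  ultimately show False
    by (simp add: plane_set_def osc_def)
qed

lemma not_in_plane_L_c_osc_inf: "\<not> in_plane (L_c :: 'a::field vec4 set) osc_inf"
proof
  assume "in_plane (L_c :: 'a vec4 set) osc_inf"
  then have "((1, 0, 0, 1) :: 'a vec4) \<in> plane_set osc_inf"
    by (auto simp: in_plane_def mem_L_c_iff)
  then show False
    by (simp add: plane_set_def osc_inf_def)
qed

lemma ext_line_L_c:
  fixes f :: "'a::field \<Rightarrow> 'b::field"
  assumes "f 0 = 0" and "f 1 = 1"
  shows "ext_line f (L_c :: 'a vec4 set) = L_c"
proof
  show "ext_line f L_c \<subseteq> L_c"
    by (auto simp: ext_line_def mem_L_c_iff assms(1))
  show "L_c \<subseteq> ext_line f L_c"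
  proof
    fix x :: "'b vec4"
    assume "x \<in> L_c"
    then obtain a b where "x = vadd (smul a (emb4 f (1, 0, 0, 1))) (smul b (emb4 f (0, 0, 1, 0)))"
      by (auto simp: mem_L_c_iff assms)
    then show "x \<in> ext_line f L_c"
      unfolding ext_line_def mem_L_c_iff by blast
  qed
qed

lemma mem_span2_left: "u \<in> span2 u v"
proof -
  have "u = vadd (smul 1 u) (smul 0 v)"
    by (cases u, cases v) simp
  then show ?thesis
    unfolding span2_def by blast
qed

theorem lemma3p1:
  fixes f :: "'a::{field,finite} \<Rightarrow> 'b::{field,finite}"
  assumes q_not3: "card (UNIV :: 'a set) mod 3 \<noteq> 0"
    and q2: "card (UNIV :: 'b set) = card (UNIV :: 'a set) ^ 2"
    and hom_add: "\<And>x y. f (x + y) = f x + f y"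
    and hom_mult: "\<And>x y. f (x * y) = f x * f y"
    and hom_one: "f 1 = 1"
  shows "EnG_line f (L_c :: 'a vec4 set)"
proof -
  have not_dvd_q: "\<not> 3 dvd card (UNIV :: 'a set)"
    using q_not3 by (simp add: dvd_eq_mod_eq_0)
  then have three_a: "(3::'a) \<noteq> 0"
    by (rule three_neq_zero_if_not_dvd_card)
  have "\<not> 3 dvd card (UNIV :: 'b set)"
    using not_dvd_q by (simp add: q2 prime_dvd_power_iff)
  then have three_b: "(3::'b) \<noteq> 0"
    by (rule three_neq_zero_if_not_dvd_card)
  have "f 0 = 0"
    using hom_add[of 0 0] by (metis add_cancel_right_right)
  then have ext: "ext_line f L_c = L_c"
    using hom_one by (rule ext_line_L_c)
  have "\<not> imag_chord f L_c"
  proof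
    assume "imag_chord f L_c"
    then obtain t :: 'b where "L_c = span2 (tc t) (tc (t ^ card (UNIV :: 'a set)))"
      unfolding imag_chord_def ext by blast
    with tc_notin_L_c mem_span2_left show False
      by metis
  qed
  moreover have "\<not> imag_axis f L_c"
  proof
    assume "imag_axis f L_c"
    then obtain t :: 'b where "L_c = plane_set (osc t) \<inter> plane_set (osc (t ^ card (UNIV :: 'a set)))"
      unfolding imag_axis_def ext by blast
    then have "in_plane L_c (osc t)"
      unfolding in_plane_def by blast
    with not_in_plane_L_c_osc[OF three_b] show False
      by blast
  qed
  ultimately show ?thesis
    by (simp add: EnG_line_def point_on_def is_line_L_c tc_notin_L_c tc_inf_notin_L_c
        not_in_plane_L_c_osc[OF three_a] not_in_plane_L_c_osc_inf)
qed

end
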